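(* Let $(YQ(1)_1)$ be the two-sided ideal of $YQ(1)$ generated by all odd elements and let $\mathbf A$ be the subalgebra of $YQ(1)$ generated by the $T^{(2k)}_{1,1}$, $k>0$. Then the natural map $\mathbf A\to YQ(1)/(YQ(1)_1)$ is an isomorphism, $\mathbf A$ is the polynomial algebra $\mathbb C[T^{(2k)}_{1,1}]_{k>0}$, and the quotient Hopf algebra structure is given by $\Delta T_{1,1}(u^{-2})=T_{1,1}(u^{-2})\otimes T_{1,1}(u^{-2})$, where $T_{1,1}(u^{-2})=\sum_{k\ge0}T^{(2k)}_{1,1}u^{-2k}$ with $T^{(0)}_{1,1}=1$.
   Context: $YQ(1)$ is the associative unital superalgebra over $\mathbb C$ generated by $T_{i,j}^{(m)}$, $m\geq1$, $i,j\in\{1,-1\}$, of parity $p(i)+p(j)$ where $p(1)=0$, $p(-1)=1$. With $T_{i,j}(u)=\delta_{ij}+\sum_{m\ge1}T^{(m)}_{i,j}u^{-m}$, the defining relations are, for all $i,j,k,l$: $(u^2-v^2)[T_{i,j}(u),T_{k,l}(v)](-1)^{p(i)p(k)+p(i)p(l)+p(k)p(l)}=(u+v)(T_{k,j}(u)T_{i,l}(v)-T_{k,j}(v)T_{i,l}(u))-(u-v)(T_{-k,j}(u)T_{-i,l}(v)-T_{k,-j}(v)T_{i,-l}(u))(-1)^{p(k)+p(l)}$ (supercommutators), and $T_{i,j}(-u)=T_{-i,-j}(u)$. It is a Hopf superalgebra with $\Delta(T^{(r)}_{i,j})=\sum_{s=0}^r\sum_k(-1)^{(p(i)+p(k))(p(j)+p(k))}T^{(s)}_{i,k}\otimes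 T^{(r-s)}_{k,j}$, $T^{(0)}_{i,j}=\delta_{ij}$. For a Hopf superalgebra, the ideal generated by the odd elements is a Hopf ideal, so the quotient is a Hopf algebra. *)

theory Defs
  imports Complex_Main "HOL-Library.Poly_Mapping"
begin

datatype idx = Pos | Neg   (* Pos = 1, Neg = -1 *)

fun negi :: "idx \<Rightarrow> idx" where
  "negi Pos = Neg" | "negi Neg = Pos"

fun par :: "idx \<Rightarrow> nat" where
  "par Pos = 0" | "par Neg = 1"

text \<open>A letter (k,i,j) stands for the generator T^(k+1)_ij.\<close>
type_synonym letter = "nat \<times> idx \<times> idx"

datatype word = Word "letter list"

fun word_list :: "word \<Rightarrow> letter list" where "word_list (Word xs) = xs"

instantiation word :: monoid_add
begin
definition zero_word :: word where "zero_word = Word []"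
definition plus_word :: "word \<Rightarrow> word \<Rightarrow> word" where
  "plus_word v w = Word (word_list v @ word_list w)"
instance
proof
  fix a b c :: word
  show "a + b + c = a + (b + c)" by (cases a; cases b; cases c) (simp add: plus_word_def)
  show "0 + a = a" by (cases a) (simp add: plus_word_def zero_word_def)
  show "a + 0 = a" by (cases a) (simp add: plus_word_def zero_word_def)
qed
end

text \<open>The free algebra C<T^(m)_ij> : finitely supported functions on words.\<close>
type_synonym FA = "word \<Rightarrow>\<^sub>0 complex"

definition scal :: "complex \<Rightarrow> FA" where
  "scal c = Poly_Mapping.single 0 c"

definition T :: "nat \<Rightarrow> idx \<Rightarrow> idx \<Rightarrow> FA" where
  "T m i j = (if m = 0 then (if i = j then 1 else 0)
              else Poly_Mapping.single (Word [(m - 1, i, j)]) 1)"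

text \<open>Integer-indexed version, T^(a) = 0 for a < 0 (coefficients of positive powers of u).\<close>
definition Tz :: "int \<Rightarrow> idx \<Rightarrow> idx \<Rightarrow> FA" where
  "Tz a i j = (if a < 0 then 0 else T (nat a) i j)"

definition scomm :: "FA \<Rightarrow> nat \<Rightarrow> FA \<Rightarrow> nat \<Rightarrow> FA" where
  "scomm x px y py = x * y - (-1) ^ (px * py) * y * x"

text \<open>Coefficient of u^(-r) v^(-s) (r, s integers) in the defining relation
 (u^2-v^2)[T_ij(u),T_kl(v)] (-1)^(p(i)p(k)+p(i)p(l)+p(k)p(l))
   = (u+v)(T_kj(u)T_il(v) - T_kj(v)T_il(u))
     - (u-v)(T_{-k,j}(u)T_{-i,l}(v) - T_{k,-j}(v)T_{i,-l}(u)) (-1)^(p(k)+p(l)),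
 written as LHS - RHS.\<close>
definition rel1 :: "idx \<Rightarrow> idx \<Rightarrow> idx \<Rightarrow> idx \<Rightarrow> int \<Rightarrow> int \<Rightarrow> FA" where
  "rel1 i j k l r s =
     (-1) ^ (par i * par k + par i * par l + par k * par l) *
       (scomm (Tz (r + 2) i j) (par i + par j) (Tz s k l) (par k + par l)
        - scomm (Tz r i j) (par i + par j) (Tz (s + 2) k l) (par k + par l))
     - ( (Tz (r + 1) k j * Tz s i l + Tz r k j * Tz (s + 1) i l)
        - (Tz s k j * Tz (r + 1) i l + Tz (s + 1) k j * Tz r i l) )
     + (-1) ^ (par k + par l) *
       ( (Tz (r + 1) (negi k) j * Tz s (negi i) l - Tz r (negi k) j * Tz (s + 1) (negi i) l)
        - (Tz s k (negi j) * Tz (r + 1) i (negi l) - Tz (s + 1) k (negi j) * Tz r i (negi l)) )"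

text \<open>Coefficient of u^(-m) in T_ij(-u) = T_{-i,-j}(u).\<close>
definition rel2 :: "nat \<Rightarrow> idx \<Rightarrow> idx \<Rightarrow> FA" where
  "rel2 m i j = (-1) ^ m * T m i j - T m (negi i) (negi j)"

definition YQ_rels :: "FA set" where
  "YQ_rels = {rel1 i j k l r s | i j k l r s. True} \<union> {rel2 m i j | m i j. True}"

inductive_set ideal_gen :: "FA set \<Rightarrow> FA set" for S where
  gen: "x \<in> S \<Longrightarrow> x \<in> ideal_gen S"
| zero: "0 \<in> ideal_gen S"
| add: "x \<in> ideal_gen S \<Longrightarrow> y \<in> ideal_gen S \<Longrightarrow> x + y \<in> ideal_gen S"
| mult: "x \<in> ideal_gen S \<Longrightarrow> a * x * b \<in> ideal_gen S"

inductive_set subalg_gen :: "FA set \<Rightarrow> FA set" for G where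
  gen: "x \<in> G \<Longrightarrow> x \<in> subalg_gen G"
| scal: "scal c \<in> subalg_gen G"
| add: "x \<in> subalg_gen G \<Longrightarrow> y \<in> subalg_gen G \<Longrightarrow> x + y \<in> subalg_gen G"
| mult: "x \<in> subalg_gen G \<Longrightarrow> y \<in> subalg_gen G \<Longrightarrow> x * y \<in> subalg_gen G"

text \<open>YQ(1) = FA / J_R. Elements of FA represent elements of YQ(1); x, y
  represent the same element iff x - y \<in> J_R.\<close>
definition J_R :: "FA set" where "J_R = ideal_gen YQ_rels"

text \<open>The relations are homogeneous, so the grading descends to YQ(1), and the odd
  elements of YQ(1) are exactly the images of odd homogeneous elements of FA.\<close>
definition word_par :: "word \<Rightarrow> nat" where
  "word_par w = (\<Sum>(k, i, j) \<leftarrow> word_list w. par i + par j)"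

definition odd_FA :: "FA \<Rightarrow> bool" where
  "odd_FA x \<longleftrightarrow> (\<forall>w \<in> Poly_Mapping.keys x. odd (word_par w))"

text \<open>Preimage in FA of the two-sided ideal (YQ(1)_1) of YQ(1) generated by the odd elements.\<close>
definition J_odd :: "FA set" where "J_odd = ideal_gen (YQ_rels \<union> {x. odd_FA x})"

text \<open>Preimage in FA of the subalgebra A generated by the T^(2k)_11, k > 0.\<close>
definition A_FA :: "FA set" where
  "A_FA = subalg_gen {T (2 * k) Pos Pos | k. k > 0}"

text \<open>C[x_0,x_1,...] as finitely supported functions on monomials (finitely supported nat to nat);
  x_k is sent to T^(2(k+1))_11.\<close>
type_synonym cpoly = "(nat \<Rightarrow>\<^sub>0 nat) \<Rightarrow>\<^sub>0 complex"

definition eval_mono :: "(nat \<Rightarrow>\<^sub>0 nat) \<Rightarrow> FA" where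
  "eval_mono m = foldr (\<lambda>k acc. T (2 * (k + 1)) Pos Pos ^ Poly_Mapping.lookup m k * acc)
                        (sorted_list_of_set (Poly_Mapping.keys m)) 1"

definition eval_poly :: "cpoly \<Rightarrow> FA" where
  "eval_poly p = (\<Sum>m \<in> Poly_Mapping.keys p. scal (Poly_Mapping.lookup p m) * eval_mono m)"

type_synonym FA2 = "(word \<times> word) \<Rightarrow>\<^sub>0 complex"

definition tens :: "FA \<Rightarrow> FA \<Rightarrow> FA2" where
  "tens x y = (\<Sum>v \<in> Poly_Mapping.keys x. \<Sum>w \<in> Poly_Mapping.keys y.
                  Poly_Mapping.single (v, w) (Poly_Mapping.lookup x v * Poly_Mapping.lookup y w))"

definition Delta_T :: "nat \<Rightarrow> idx \<Rightarrow> idx \<Rightarrow> FA2" where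
  "Delta_T r i j = (\<Sum>s \<in> {0..r}. \<Sum>k \<in> {Pos, Neg}.
      tens ((-1) ^ ((par i + par k) * (par j + par k)) * T s i k) (T (r - s) k j))"

text \<open>Kernel of FA (x) FA -> Q (x) Q where Q = FA / J_odd = YQ(1)/(YQ(1)_1), i.e.
  J_odd (x) FA + FA (x) J_odd (scalars are absorbed since J_odd is an ideal).\<close>
inductive_set J2 :: "FA2 set" where
  zero: "0 \<in> J2"
| left: "x \<in> J_odd \<Longrightarrow> tens x y \<in> J2"
| right: "y \<in> J_odd \<Longrightarrow> tens x y \<in> J2"
| add: "a \<in> J2 \<Longrightarrow> b \<in> J2 \<Longrightarrow> a + b \<in> J2"

end

theory Submission
  imports Defs
begin

text \<open>
  Sending T^(m)_ij to delta_ij x_(m/2 - 1) for even m > 0 and to 0 for odd m defines an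
  algebra map from the free algebra to the commutative ring C[x_0, x_1, ...]. It kills the
  defining relations of YQ(1) and every odd element, and it is a left inverse of the evaluation
  map C[x_0, x_1, ...] -> A; this gives both injectivity statements.

  Inside YQ(1), adding the relation for (i,j,k,l) = (1,1,1,1) at (r,s) and at (s,r) and using
  T_(-1,1)(u) = T_(1,-1)(-u) shows [T^(r+2)_11, T^(s)_11] = [T^(r)_11, T^(s+2)_11] for even r, s,
  so the generators of A commute by induction and A is spanned by evaluated polynomials. The
  relation for (1,-1,-1,1) at s = -1 together with T_11(-u) = T_(-1,-1)(u) shows that for odd r,
  2 T^(r)_11 is the anticommutator of T^(r)_(1,-1) and T^(1)_(-1,1). Hence modulo odd elements
  every generator lies in A, and all terms of Delta T^(2k)_11 other than the
  T^(2a)_11 (x) T^(2k-2a)_11 vanish.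
\<close>

lemma poly_mapping_sum_single:
  "(x :: 'a \<Rightarrow>\<^sub>0 'b::comm_monoid_add)
     = (\<Sum>w\<in>Poly_Mapping.keys x. Poly_Mapping.single w (Poly_Mapping.lookup x w))"
  by (rule poly_mapping_eqI) (simp add: lookup_sum lookup_single when_def in_keys_iff)

lemma scal_mult_single: "scal c * Poly_Mapping.single w d = Poly_Mapping.single w (c * d)"
  by (simp add: scal_def mult_single)

lemma scal_mult: "scal a * scal b = scal (a * b)"
  by (simp add: scal_def mult_single)

lemma scal_commute: "scal c * x = x * scal c"
proof -
  have "scal c * x = (\<Sum>w\<in>Poly_Mapping.keys x. scal c * Poly_Mapping.single w (Poly_Mapping.lookup x w))"
    by (subst poly_mapping_sum_single[of x]) (simp add: sum_distrib_left)
  also have "\<dots> = (\<Sum>w\<in>Poly_Mapping.keys x. Poly_Mapping.single w (Poly_Mapping.lookup x w) * scal c)"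
    by (simp add: scal_def mult_single mult.commute)
  also have "\<dots> = x * scal c"
    by (subst (2) poly_mapping_sum_single[of x]) (simp add: sum_distrib_right)
  finally show ?thesis .
qed

lemma ideal_gen_mult_left: "x \<in> ideal_gen S \<Longrightarrow> a * x \<in> ideal_gen S"
  using ideal_gen.mult[of x S a 1] by simp

lemma ideal_gen_mult_right: "x \<in> ideal_gen S \<Longrightarrow> x * b \<in> ideal_gen S"
  using ideal_gen.mult[of x S 1 b] by simp

lemma ideal_gen_diff: "x \<in> ideal_gen S \<Longrightarrow> y \<in> ideal_gen S \<Longrightarrow> x - y \<in> ideal_gen S"
  using ideal_gen.add[of x S "(-1) * y"] ideal_gen_mult_left[of y S "-1"] by simp

lemma ideal_gen_sum: "(\<And>i. i \<in> A \<Longrightarrow> f i \<in> ideal_gen S) \<Longrightarrow> sum f A \<in> ideal_gen S"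
  by (induction A rule: infinite_finite_induct) (auto intro: ideal_gen.intros)

lemma ideal_gen_mono: "S \<subseteq> S' \<Longrightarrow> ideal_gen S \<subseteq> ideal_gen S'"
proof
  fix x assume "S \<subseteq> S'" and "x \<in> ideal_gen S"
  from this(2) show "x \<in> ideal_gen S'"
    by induction (use \<open>S \<subseteq> S'\<close> in \<open>auto intro: ideal_gen.intros\<close>)
qed

lemma ideal_gen_half: "x + x \<in> ideal_gen S \<Longrightarrow> x \<in> ideal_gen S"
proof -
  assume "x + x \<in> ideal_gen S"
  then have "scal (1/2) * (x + x) \<in> ideal_gen S" by (rule ideal_gen_mult_left)
  moreover have "scal (1/2) * (x + x) = x"
  proof -
    have "scal (1/2) * (x + x) = scal (1/2) * 2 * x" by (simp add: mult_2 mult.assoc)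
    also have "scal (1/2) * 2 = 1"
      using scal_mult_single[of "1/2" 0 2] by (simp add: scal_def)
    finally show ?thesis by simp
  qed
  ultimately show ?thesis by simp
qed

lemma ideal_gen_commutator: "x \<in> ideal_gen S \<Longrightarrow> x * y - y * x \<in> ideal_gen S"
  by (rule ideal_gen_diff[OF ideal_gen_mult_right ideal_gen_mult_left])

lemma ideal_gen_commutator_swap:
  "x * y - y * x \<in> ideal_gen S \<Longrightarrow> y * x - x * y \<in> ideal_gen S"
  using ideal_gen_mult_left[of "x * y - y * x" S "-1"] by simp

lemma commutator_subalg_gen:
  assumes "\<And>g. g \<in> G \<Longrightarrow> x * g - g * x \<in> ideal_gen S" and "y \<in> subalg_gen G"
  shows "x * y - y * x \<in> ideal_gen S"
  using assms(2)
proof (induction y rule: subalg_gen.induct)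
  case (gen g)
  then show ?case by (rule assms(1))
next
  case (scal c)
  then show ?case by (simp add: scal_commute ideal_gen.zero)
next
  case (add y1 y2)
  have "x * (y1 + y2) - (y1 + y2) * x = (x * y1 - y1 * x) + (x * y2 - y2 * x)"
    by (simp add: algebra_simps)
  then show ?case using add.IH by (simp add: ideal_gen.add)
next
  case (mult y1 y2)
  have "x * (y1 * y2) - y1 * y2 * x = (x * y1 - y1 * x) * y2 + y1 * (x * y2 - y2 * x)"
    by (simp add: algebra_simps)
  then show ?case
    using mult.IH by (simp add: ideal_gen.add ideal_gen_mult_left ideal_gen_mult_right)
qed

lemma subalg_gen_commute_mod_ideal:
  assumes "\<And>g h. g \<in> G \<Longrightarrow> h \<in> G \<Longrightarrow> g * h - h * g \<in> ideal_gen S"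
    and "x \<in> subalg_gen G" "y \<in> subalg_gen G"
  shows "x * y - y * x \<in> ideal_gen S"
proof (rule commutator_subalg_gen[OF _ assms(3)])
  fix g assume "g \<in> G"
  then have "g * x - x * g \<in> ideal_gen S"
    using assms(1) by (intro commutator_subalg_gen[OF _ assms(2)])
  then show "x * g - g * x \<in> ideal_gen S" by (rule ideal_gen_commutator_swap)
qed

lemmas ideal_gen_closed =
  ideal_gen.zero ideal_gen.add ideal_gen_diff ideal_gen_mult_left ideal_gen_mult_right ideal_gen_sum

lemmas J_R_closed = ideal_gen_closed[where S = YQ_rels, folded J_R_def]

lemmas J_odd_closed = ideal_gen_closed[where S = "YQ_rels \<union> {x. odd_FA x}", folded J_odd_def]

lemma J_R_subset_J_odd: "J_R \<subseteq> J_odd"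
  unfolding J_R_def J_odd_def by (rule ideal_gen_mono) blast

lemmas A_FA_closed =
  subalg_gen.intros(2-4)[where G = "{T (2 * k) Pos Pos | k. k > 0}", folded A_FA_def]

lemma A_FA_T: "k > 0 \<Longrightarrow> T (2 * k) Pos Pos \<in> A_FA"
  unfolding A_FA_def by (rule subalg_gen.gen) blast

lemma A_FA_one: "1 \<in> A_FA"
  using A_FA_closed(1)[of 1] by (simp add: scal_def)

lemma A_FA_power: "x \<in> A_FA \<Longrightarrow> x ^ n \<in> A_FA"
  by (induction n) (auto intro: A_FA_one A_FA_closed)

section \<open>Extending a letter assignment to an algebra homomorphism\<close>

definition word_prod :: "(letter \<Rightarrow> 'a::monoid_mult) \<Rightarrow> word \<Rightarrow> 'a" where
  "word_prod f w = prod_list (map f (word_list w))"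

lemma word_prod_plus: "word_prod f (v + w) = word_prod f v * word_prod f w"
  by (cases v; cases w) (simp add: word_prod_def plus_word_def)

lemma word_prod_zero: "word_prod f 0 = 1"
  by (simp add: word_prod_def zero_word_def)

definition lift_FA ::
    "(letter \<Rightarrow> ('m::comm_monoid_add \<Rightarrow>\<^sub>0 complex)) \<Rightarrow> FA \<Rightarrow> 'm \<Rightarrow>\<^sub>0 complex" where
  "lift_FA f x =
     (\<Sum>w\<in>Poly_Mapping.keys x. Poly_Mapping.single 0 (Poly_Mapping.lookup x w) * word_prod f w)"

lemma lift_FA_superset:
  assumes "finite K" "Poly_Mapping.keys x \<subseteq> K"
  shows "lift_FA f x = (\<Sum>w\<in>K. Poly_Mapping.single 0 (Poly_Mapping.lookup x w) * word_prod f w)"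
  unfolding lift_FA_def
  by (rule sum.mono_neutral_left) (use assms in \<open>auto simp: in_keys_iff\<close>)

lemma lift_FA_zero: "lift_FA f 0 = 0"
  by (simp add: lift_FA_def)

lemma lift_FA_add: "lift_FA f (x + y) = lift_FA f x + lift_FA f y"
proof -
  let ?K = "Poly_Mapping.keys x \<union> Poly_Mapping.keys y"
  show ?thesis
    by (simp add: lift_FA_superset[OF _ keys_add] lift_FA_superset[of ?K x] lift_FA_superset[of ?K y]
        lookup_add single_add distrib_right sum.distrib)
qed

lemma lift_FA_diff: "lift_FA f (x - y) = lift_FA f x - lift_FA f y"
proof -
  let ?K = "Poly_Mapping.keys x \<union> Poly_Mapping.keys y"
  show ?thesis
    by (simp add: lift_FA_superset[OF _ keys_diff] lift_FA_superset[of ?K x] lift_FA_superset[of ?K y]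
        lookup_minus single_diff left_diff_distrib sum_subtractf)
qed

lemma lift_FA_sum: "lift_FA f (sum g A) = (\<Sum>a\<in>A. lift_FA f (g a))"
  by (induction A rule: infinite_finite_induct) (auto simp: lift_FA_add lift_FA_zero)

lemma lift_FA_single:
  "lift_FA f (Poly_Mapping.single w c) = Poly_Mapping.single 0 c * word_prod f w"
  by (simp add: lift_FA_superset[of "{w}"])

lemma single_zero_mult:
  "Poly_Mapping.single 0 (a * b)
     = Poly_Mapping.single 0 a * (Poly_Mapping.single 0 b :: 'm::monoid_add \<Rightarrow>\<^sub>0 'a::semiring_0)"
  by (simp add: mult_single)

lemma lift_FA_mult: "lift_FA f (x * y) = lift_FA f x * lift_FA f y"
proof -
  let ?x = "Poly_Mapping.lookup x" and ?y = "Poly_Mapping.lookup y"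
  have "x * y = (\<Sum>v\<in>Poly_Mapping.keys x. Poly_Mapping.single v (?x v)) *
                (\<Sum>w\<in>Poly_Mapping.keys y. Poly_Mapping.single w (?y w))"
    using poly_mapping_sum_single[of x] poly_mapping_sum_single[of y] by simp
  also have "\<dots> = (\<Sum>v\<in>Poly_Mapping.keys x. \<Sum>w\<in>Poly_Mapping.keys y.
       Poly_Mapping.single (v + w) (?x v * ?y w))"
    by (simp add: sum_distrib_left sum_distrib_right mult_single) (rule sum.swap)
  finally have "lift_FA f (x * y) = (\<Sum>v\<in>Poly_Mapping.keys x. \<Sum>w\<in>Poly_Mapping.keys y.
       Poly_Mapping.single 0 (?x v) * word_prod f v * (Poly_Mapping.single 0 (?y w) * word_prod f w))"
    by (simp add: lift_FA_sum lift_FA_single word_prod_plus single_zero_mult mult_ac)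
  also have "\<dots> = lift_FA f x * lift_FA f y"
    by (simp add: lift_FA_def sum_product)
  finally show ?thesis .
qed

lemma lift_FA_scal: "lift_FA f (scal c) = Poly_Mapping.single 0 c"
  by (simp add: scal_def lift_FA_single word_prod_zero)

lemma lift_FA_one: "lift_FA f 1 = 1"
  using lift_FA_scal[of f 1] by (simp add: scal_def)

lemma lift_FA_power: "lift_FA f (x ^ n) = lift_FA f x ^ n"
  by (induction n) (simp_all add: lift_FA_one lift_FA_mult)

lemma lift_FA_uminus: "lift_FA f (- x) = - lift_FA f x"
  using lift_FA_diff[of f 0 x] by (simp add: lift_FA_zero)

lemma lift_FA_ideal_gen:
  "x \<in> ideal_gen S \<Longrightarrow> (\<And>s. s \<in> S \<Longrightarrow> lift_FA f s = 0) \<Longrightarrow> lift_FA f x = 0"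
  by (induction rule: ideal_gen.induct) (auto simp: lift_FA_zero lift_FA_add lift_FA_mult)

lemmas lift_FA_simps = lift_FA_zero lift_FA_one lift_FA_add lift_FA_diff lift_FA_uminus
  lift_FA_mult lift_FA_power lift_FA_sum lift_FA_scal

lemma word_prod_odd:
  fixes f :: "letter \<Rightarrow> 'a::semiring_1"
  assumes "\<And>k i j. i \<noteq> j \<Longrightarrow> f (k, i, j) = 0" and "odd (word_par w)"
  shows "word_prod f w = 0"
proof -
  have "prod_list (map f ls) = 0" if "odd (\<Sum>(k, i, j) \<leftarrow> ls. par i + par j)" for ls
    using that
  proof (induction ls)
    case (Cons l ls)
    obtain k i j where l: "l = (k, i, j)" by (cases l)
    show ?case
      using Cons assms(1) l by (cases "i = j") auto
  qed simp
  then show ?thesis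
    using assms(2) by (cases w) (simp add: word_prod_def word_par_def)
qed

section \<open>The homomorphism to commutative polynomials\<close>

text \<open>T_image a is the image of T^(a)_ii. It is indexed by integers so that it also serves the
  coefficients Tz of the defining relations, which vanish at negative indices.\<close>

definition T_image :: "int \<Rightarrow> cpoly" where
  "T_image a =
     (if a = 0 then 1
      else if a > 0 \<and> even a then Poly_Mapping.single (Poly_Mapping.single (nat (a div 2) - 1) 1) 1
      else 0)"

definition to_poly :: "FA \<Rightarrow> cpoly" where
  "to_poly = lift_FA (\<lambda>(k, i, j). if i = j then T_image (int (Suc k)) else 0)"

lemmas to_poly_simps = lift_FA_simps
  [where f = "\<lambda>(k, i, j). if i = j then T_image (int (Suc k)) else 0", folded to_poly_def]

lemmas to_poly_ideal_gen = lift_FA_ideal_gen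
  [where f = "\<lambda>(k, i, j). if i = j then T_image (int (Suc k)) else 0", folded to_poly_def]

lemma to_poly_T: "to_poly (T m i j) = (if i = j then T_image (int m) else 0)"
proof (cases m)
  case 0
  then show ?thesis by (simp add: T_def to_poly_simps T_image_def)
next
  case (Suc n)
  then show ?thesis by (simp add: T_def to_poly_def lift_FA_single word_prod_def)
qed

lemma to_poly_Tz: "to_poly (Tz a i j) = (if i = j then T_image a else 0)"
  by (cases "a < 0") (simp_all add: Tz_def to_poly_T T_image_def to_poly_simps)

lemma to_poly_rel1: "to_poly (rel1 i j k l r s) = 0"
  by (cases i; cases j; cases k; cases l)
     (simp_all add: rel1_def scomm_def to_poly_simps to_poly_Tz algebra_simps)

lemma to_poly_rel2: "to_poly (rel2 m i j) = 0"
proof -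
  have "negi i = negi j \<longleftrightarrow> i = j" by (cases i; cases j) auto
  moreover have "odd m \<Longrightarrow> T_image (int m) = 0" using odd_pos[of m] by (simp add: T_image_def)
  ultimately show ?thesis
    by (cases "even m") (auto simp: rel2_def to_poly_simps to_poly_T)
qed

lemma to_poly_odd: "odd_FA x \<Longrightarrow> to_poly x = 0"
  unfolding to_poly_def lift_FA_def odd_FA_def
  by (auto intro!: sum.neutral word_prod_odd)

lemma to_poly_J_odd: "x \<in> J_odd \<Longrightarrow> to_poly x = 0"
  unfolding J_odd_def
  by (erule to_poly_ideal_gen) (auto simp: YQ_rels_def to_poly_rel1 to_poly_rel2 to_poly_odd)

definition mono_prod :: "nat list \<Rightarrow> (nat \<Rightarrow>\<^sub>0 nat) \<Rightarrow> FA" where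
  "mono_prod L m = foldr (\<lambda>k acc. T (2 * (k + 1)) Pos Pos ^ Poly_Mapping.lookup m k * acc) L 1"

lemma eval_mono_eq_mono_prod: "eval_mono m = mono_prod (sorted_list_of_set (Poly_Mapping.keys m)) m"
  by (simp add: eval_mono_def mono_prod_def)

lemma to_poly_mono_prod:
  "distinct L \<Longrightarrow> to_poly (mono_prod L m)
     = Poly_Mapping.single (\<Sum>k\<in>set L. Poly_Mapping.single k (Poly_Mapping.lookup m k)) 1"
proof (induction L)
  case Nil
  then show ?case by (simp add: mono_prod_def to_poly_simps)
next
  case (Cons k L)
  have "to_poly (T (2 * (k + 1)) Pos Pos) = Poly_Mapping.single (Poly_Mapping.single k 1) 1"
    by (simp add: to_poly_T T_image_def nat_add_distrib)
  moreover have "Poly_Mapping.single (Poly_Mapping.single k 1) 1 ^ n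
      = (Poly_Mapping.single (Poly_Mapping.single k n) 1 :: cpoly)" for n
    by (induction n) (simp_all add: mult_single single_add[symmetric])
  ultimately show ?case
    using Cons by (simp add: mono_prod_def to_poly_simps mult_single)
qed

lemma to_poly_eval_mono: "to_poly (eval_mono m) = Poly_Mapping.single m 1"
  using to_poly_mono_prod[of "sorted_list_of_set (Poly_Mapping.keys m)" m]
    poly_mapping_sum_single[of m]
  by (simp add: eval_mono_eq_mono_prod)

lemma to_poly_eval_poly: "to_poly (eval_poly p) = p"
proof -
  have "to_poly (eval_poly p)
      = (\<Sum>m\<in>Poly_Mapping.keys p. Poly_Mapping.single m (Poly_Mapping.lookup p m))"
    by (simp add: eval_poly_def to_poly_simps to_poly_eval_mono mult_single)
  then show ?thesis using poly_mapping_sum_single[of p] by simp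
qed

lemma eval_poly_J_R_eq_0: "eval_poly p \<in> J_R \<Longrightarrow> p = 0"
  using to_poly_J_odd[of "eval_poly p"] J_R_subset_J_odd by (auto simp: to_poly_eval_poly)

section \<open>Consequences of the defining relations\<close>

lemma rel1_in_J_R: "rel1 i j k l r s \<in> J_R"
  unfolding J_R_def YQ_rels_def by (rule ideal_gen.gen) blast

lemma rel2_in_J_R: "rel2 m i j \<in> J_R"
  unfolding J_R_def YQ_rels_def by (rule ideal_gen.gen) blast

lemma T_Neg_Pos_even: "even m \<Longrightarrow> T m Neg Pos - T m Pos Neg \<in> J_R"
  using J_R_closed(4)[OF rel2_in_J_R[of m Pos Neg], of "-1"] by (simp add: rel2_def)

lemma T_Neg_Pos_odd: "odd m \<Longrightarrow> T m Neg Pos + T m Pos Neg \<in> J_R"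
  using J_R_closed(4)[OF rel2_in_J_R[of m Pos Neg], of "-1"] by (simp add: rel2_def)

lemma commutator_T_Neg_Pos:
  assumes "odd m" "even n"
  shows "(T m Neg Pos * T n Neg Pos - T n Neg Pos * T m Neg Pos)
           - (T n Pos Neg * T m Pos Neg - T m Pos Neg * T n Pos Neg) \<in> J_R"
proof -
  let ?c1 = "T m Neg Pos" and ?c2 = "T n Neg Pos" and ?b1 = "T m Pos Neg" and ?b2 = "T n Pos Neg"
  have "(?c1 * ?c2 - ?c2 * ?c1) - (?b2 * ?b1 - ?b1 * ?b2)
      = ((?c1 + ?b1) * ?c2 - ?c2 * (?c1 + ?b1)) + ((?c2 - ?b2) * ?b1 - ?b1 * (?c2 - ?b2))"
    by (simp add: algebra_simps)
  also have "\<dots> \<in> J_R"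
    using T_Neg_Pos_odd[OF assms(1)] T_Neg_Pos_even[OF assms(2)] unfolding J_R_def
    by (rule ideal_gen.add[OF ideal_gen_commutator ideal_gen_commutator])
  finally show ?thesis .
qed

lemma rel1_Pos_Pos_Pos_Pos:
  "rel1 Pos Pos Pos Pos (int r) (int s) =
     (T (r + 2) Pos Pos * T s Pos Pos - T s Pos Pos * T (r + 2) Pos Pos)
   - (T r Pos Pos * T (s + 2) Pos Pos - T (s + 2) Pos Pos * T r Pos Pos)
   - ((T (r + 1) Pos Pos * T s Pos Pos + T r Pos Pos * T (s + 1) Pos Pos)
      - (T s Pos Pos * T (r + 1) Pos Pos + T (s + 1) Pos Pos * T r Pos Pos))
   + ((T (r + 1) Neg Pos * T s Neg Pos - T r Neg Pos * T (s + 1) Neg Pos)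
      - (T s Pos Neg * T (r + 1) Pos Neg - T (s + 1) Pos Neg * T r Pos Neg))"
  by (simp add: rel1_def scomm_def Tz_def nat_add_distrib)

lemma T_commutator_shift:
  "(T (2 * a + 2) Pos Pos * T (2 * b) Pos Pos - T (2 * b) Pos Pos * T (2 * a + 2) Pos Pos)
   - (T (2 * a) Pos Pos * T (2 * b + 2) Pos Pos - T (2 * b + 2) Pos Pos * T (2 * a) Pos Pos) \<in> J_R"
  (is "?X \<in> J_R")
proof -
  let ?c = "\<lambda>m. T m Neg Pos" and ?b = "\<lambda>m. T m Pos Neg"
  let ?Q1 = "(?c (2 * a + 1) * ?c (2 * b) - ?c (2 * b) * ?c (2 * a + 1))
             - (?b (2 * b) * ?b (2 * a + 1) - ?b (2 * a + 1) * ?b (2 * b))"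
  let ?Q2 = "(?c (2 * b + 1) * ?c (2 * a) - ?c (2 * a) * ?c (2 * b + 1))
             - (?b (2 * a) * ?b (2 * b + 1) - ?b (2 * b + 1) * ?b (2 * a))"
  have "?Q1 \<in> J_R" "?Q2 \<in> J_R"
    using commutator_T_Neg_Pos[of "2 * a + 1" "2 * b"] commutator_T_Neg_Pos[of "2 * b + 1" "2 * a"]
    by simp_all
  moreover have "?X + ?X = (rel1 Pos Pos Pos Pos (int (2 * a)) (int (2 * b))
                   + rel1 Pos Pos Pos Pos (int (2 * b)) (int (2 * a))) - (?Q1 + ?Q2)"
    unfolding rel1_Pos_Pos_Pos_Pos by (simp add: algebra_simps)
  ultimately have "?X + ?X \<in> J_R"
    using J_R_closed(3)[OF J_R_closed(2)[OF rel1_in_J_R rel1_in_J_R] J_R_closed(2)] by simp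
  then show ?thesis unfolding J_R_def by (rule ideal_gen_half)
qed

lemma T_even_commute:
  "T (2 * a) Pos Pos * T (2 * b) Pos Pos - T (2 * b) Pos Pos * T (2 * a) Pos Pos \<in> J_R"
proof (induction a arbitrary: b)
  case 0
  then show ?case by (simp add: T_def J_R_closed)
next
  case (Suc a)
  have "T (2 * Suc a) Pos Pos * T (2 * b) Pos Pos - T (2 * b) Pos Pos * T (2 * Suc a) Pos Pos
      = ((T (2 * a + 2) Pos Pos * T (2 * b) Pos Pos - T (2 * b) Pos Pos * T (2 * a + 2) Pos Pos)
         - (T (2 * a) Pos Pos * T (2 * b + 2) Pos Pos - T (2 * b + 2) Pos Pos * T (2 * a) Pos Pos))
        + (T (2 * a) Pos Pos * T (2 * (b + 1)) Pos Pos - T (2 * (b + 1)) Pos Pos * T (2 * a) Pos Pos)"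
    by simp
  also have "\<dots> \<in> J_R"
    using T_commutator_shift Suc.IH by (rule J_R_closed)
  finally show ?case .
qed

lemma A_FA_commute: "x \<in> A_FA \<Longrightarrow> y \<in> A_FA \<Longrightarrow> x * y - y * x \<in> J_R"
  unfolding A_FA_def J_R_def
  by (rule subalg_gen_commute_mod_ideal) (auto simp: T_even_commute[unfolded J_R_def])

lemma T_offdiag_J_odd: "i \<noteq> j \<Longrightarrow> T m i j \<in> J_odd"
proof (cases m)
  case 0
  assume "i \<noteq> j"
  then show ?thesis using 0 by (simp add: T_def J_odd_closed)
next
  case (Suc n)
  assume "i \<noteq> j"
  then have "odd_FA (T m i j)"
    using Suc by (cases i; cases j) (auto simp: T_def odd_FA_def word_par_def)
  then show ?thesis unfolding J_odd_def by (intro ideal_gen.gen) blast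
qed

lemma rel1_Pos_Neg_Neg_Pos:
  "rel1 Pos Neg Neg Pos (int r) (-1) =
     - (T r Pos Neg * T 1 Neg Pos + T 1 Neg Pos * T r Pos Neg) - (T r Neg Neg - T r Pos Pos)"
  by (simp add: rel1_def scomm_def Tz_def T_def nat_add_distrib)

lemma T_odd_J_odd: "odd r \<Longrightarrow> T r Pos Pos \<in> J_odd"
proof -
  assume "odd r"
  then have "T r Pos Pos + T r Pos Pos
      = (rel1 Pos Neg Neg Pos (int r) (-1) + (T r Pos Neg * T 1 Neg Pos + T 1 Neg Pos * T r Pos Neg))
        - rel2 r Pos Pos"
    by (simp add: rel1_Pos_Neg_Neg_Pos rel2_def)
  also have "\<dots> \<in> J_odd"
    using J_R_subset_J_odd rel1_in_J_R rel2_in_J_R T_offdiag_J_odd[of Neg Pos 1]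
    by (intro J_odd_closed) auto
  finally show ?thesis unfolding J_odd_def by (rule ideal_gen_half)
qed

section \<open>The subalgebra A as a quotient of the polynomial ring\<close>

lemma mono_prod_A_FA: "mono_prod L m \<in> A_FA"
proof -
  have "T (2 * (k + 1)) Pos Pos \<in> A_FA" for k by (rule A_FA_T) simp
  then show ?thesis
    by (induction L) (auto simp: mono_prod_def intro: A_FA_one A_FA_closed A_FA_power)
qed

lemma eval_mono_eq_mono_prod_upt:
  assumes "Poly_Mapping.degree m \<le> N"
  shows "eval_mono m = mono_prod [0..<N] m"
proof -
  let ?in_keys = "\<lambda>k. k \<in> Poly_Mapping.keys m"
  have filter_eq: "mono_prod (filter ?in_keys L) m = mono_prod L m" for L
    by (induction L) (auto simp: mono_prod_def in_keys_iff)
  have "[0..<N] = [0..<Poly_Mapping.degree m] @ [Poly_Mapping.degree m..<N]"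
    using assms upt_add_eq_append[of 0 "Poly_Mapping.degree m" "N - Poly_Mapping.degree m"] by simp
  then have "filter ?in_keys [0..<N] = filter ?in_keys [0..<Poly_Mapping.degree m]"
    by (auto dest: in_keys_less_degree intro!: filter_False)
  then show ?thesis
    by (metis filter_eq eval_mono_eq_mono_prod sorted_list_of_set_keys)
qed

lemma mono_prod_add: "mono_prod L (m + n) - mono_prod L m * mono_prod L n \<in> J_R"
proof (induction L)
  case Nil
  then show ?case by (simp add: mono_prod_def J_R_closed)
next
  case (Cons k L)
  let ?t = "T (2 * (k + 1)) Pos Pos"
  let ?a = "?t ^ Poly_Mapping.lookup m k" and ?b = "?t ^ Poly_Mapping.lookup n k"
  have "mono_prod (k # L) (m + n) - mono_prod (k # L) m * mono_prod (k # L) n =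
     ?a * ?b * (mono_prod L (m + n) - mono_prod L m * mono_prod L n)
     + ?a * (?b * mono_prod L m - mono_prod L m * ?b) * mono_prod L n"
    by (simp add: mono_prod_def lookup_add power_add algebra_simps)
  also have "\<dots> \<in> J_R"
  proof -
    have "?t \<in> A_FA" using A_FA_T[of "k + 1"] by simp
    then have "?b * mono_prod L m - mono_prod L m * ?b \<in> J_R"
      by (intro A_FA_commute A_FA_power mono_prod_A_FA)
    then show ?thesis
      using Cons.IH by (rule J_R_closed(2)[OF J_R_closed(4) J_R_closed(5)[OF J_R_closed(4)], rotated])
  qed
  finally show ?case .
qed

lemma eval_mono_add: "eval_mono (m + n) - eval_mono m * eval_mono n \<in> J_R"
proof -
  let ?N = "Poly_Mapping.degree m + Poly_Mapping.degree n + Poly_Mapping.degree (m + n)"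
  show ?thesis
    using mono_prod_add[of "[0..<?N]" m n]
    by (simp add: eval_mono_eq_mono_prod_upt[of m ?N] eval_mono_eq_mono_prod_upt[of n ?N]
        eval_mono_eq_mono_prod_upt[of "m + n" ?N])
qed

lemma eval_poly_superset:
  assumes "finite K" "Poly_Mapping.keys p \<subseteq> K"
  shows "eval_poly p = (\<Sum>m\<in>K. scal (Poly_Mapping.lookup p m) * eval_mono m)"
  unfolding eval_poly_def
  by (rule sum.mono_neutral_left) (use assms in \<open>auto simp: in_keys_iff scal_def\<close>)

lemma eval_poly_add: "eval_poly (p + q) = eval_poly p + eval_poly q"
proof -
  let ?K = "Poly_Mapping.keys p \<union> Poly_Mapping.keys q"
  show ?thesis
    by (simp add: eval_poly_superset[OF _ keys_add] eval_poly_superset[of ?K p]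
        eval_poly_superset[of ?K q] lookup_add scal_def single_add distrib_right sum.distrib)
qed

lemma eval_poly_single: "eval_poly (Poly_Mapping.single m c) = scal c * eval_mono m"
  by (simp add: eval_poly_superset[of "{m}"])

lemma eval_poly_zero: "eval_poly 0 = 0"
  by (simp add: eval_poly_def)

lemma eval_poly_sum: "eval_poly (sum f A) = (\<Sum>a\<in>A. eval_poly (f a))"
  by (induction A rule: infinite_finite_induct) (auto simp: eval_poly_zero eval_poly_add)

lemma eval_poly_mult: "eval_poly (p * q) - eval_poly p * eval_poly q \<in> J_R"
proof -
  let ?p = "Poly_Mapping.lookup p" and ?q = "Poly_Mapping.lookup q"
  let ?P = "Poly_Mapping.keys p" and ?Q = "Poly_Mapping.keys q"
  have "p * q = (\<Sum>v\<in>?P. Poly_Mapping.single v (?p v)) * (\<Sum>w\<in>?Q. Poly_Mapping.single w (?q w))"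
    using poly_mapping_sum_single[of p] poly_mapping_sum_single[of q] by simp
  also have "\<dots> = (\<Sum>v\<in>?P. \<Sum>w\<in>?Q. Poly_Mapping.single (v + w) (?p v * ?q w))"
    by (simp add: sum_distrib_left sum_distrib_right mult_single) (rule sum.swap)
  finally have "eval_poly (p * q) = (\<Sum>v\<in>?P. \<Sum>w\<in>?Q. scal (?p v * ?q w) * eval_mono (v + w))"
    by (simp add: eval_poly_sum eval_poly_single)
  moreover have "eval_poly p * eval_poly q
      = (\<Sum>v\<in>?P. \<Sum>w\<in>?Q. scal (?p v) * eval_mono v * (scal (?q w) * eval_mono w))"
    by (simp add: eval_poly_def sum_product)
  moreover have "scal (?p v) * eval_mono v * (scal (?q w) * eval_mono w)
      = scal (?p v * ?q w) * (eval_mono v * eval_mono w)" for v w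
  proof -
    have "scal (?p v) * eval_mono v * (scal (?q w) * eval_mono w)
        = scal (?p v) * (eval_mono v * scal (?q w)) * eval_mono w"
      by (simp only: mult.assoc)
    also have "\<dots> = scal (?p v) * (scal (?q w) * eval_mono v) * eval_mono w"
      by (simp only: scal_commute)
    finally show ?thesis by (simp add: mult.assoc flip: scal_mult)
  qed
  ultimately have "eval_poly (p * q) - eval_poly p * eval_poly q
      = (\<Sum>v\<in>?P. \<Sum>w\<in>?Q. scal (?p v * ?q w) * (eval_mono (v + w) - eval_mono v * eval_mono w))"
    by (simp add: sum_subtractf right_diff_distrib)
  also have "\<dots> \<in> J_R"
    by (intro J_R_closed eval_mono_add)
  finally show ?thesis .
qed

lemma A_FA_eval_poly: "a \<in> A_FA \<Longrightarrow> \<exists>p. a - eval_poly p \<in> J_R"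
  unfolding A_FA_def
proof (induction a rule: subalg_gen.induct)
  case (gen x)
  then obtain k where "x = T (2 * Suc k) Pos Pos" by (auto dest: gr0_implies_Suc)
  moreover define p :: cpoly where "p = Poly_Mapping.single (Poly_Mapping.single k 1) 1"
  ultimately have "eval_poly p = x"
    by (simp add: eval_poly_single eval_mono_def scal_def)
  then show ?case using J_R_closed(1) by (intro exI[of _ p]) simp
next
  case (scal c)
  have "eval_poly (Poly_Mapping.single 0 c) = scal c"
    by (simp add: eval_poly_single eval_mono_def)
  then show ?case using J_R_closed(1) by (intro exI[of _ "Poly_Mapping.single 0 c"]) simp
next
  case (add x y)
  then obtain p q where "x - eval_poly p \<in> J_R" "y - eval_poly q \<in> J_R" by blast
  then have "(x - eval_poly p) + (y - eval_poly q) \<in> J_R" by (rule J_R_closed)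
  then show ?case by (intro exI[of _ "p + q"]) (simp add: eval_poly_add algebra_simps)
next
  case (mult x y)
  then obtain p q where pq: "x - eval_poly p \<in> J_R" "y - eval_poly q \<in> J_R" by blast
  have eq: "x * y - eval_poly (p * q)
      = (x - eval_poly p) * y + eval_poly p * (y - eval_poly q)
        - (eval_poly (p * q) - eval_poly p * eval_poly q)"
    by (simp add: algebra_simps)
  have "x * y - eval_poly (p * q) \<in> J_R"
    unfolding eq
    by (rule J_R_closed(3)[OF J_R_closed(2)[OF J_R_closed(5)[OF pq(1)] J_R_closed(4)[OF pq(2)]]
          eval_poly_mult])
  then show ?case by blast
qed

lemma A_FA_J_odd_imp_J_R: "a \<in> A_FA \<Longrightarrow> a \<in> J_odd \<Longrightarrow> a \<in> J_R"
proof -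
  assume "a \<in> A_FA" "a \<in> J_odd"
  obtain p where p: "a - eval_poly p \<in> J_R" using A_FA_eval_poly[OF \<open>a \<in> A_FA\<close>] by blast
  have "to_poly (a - eval_poly p) = 0" "to_poly a = 0"
    using p J_R_subset_J_odd \<open>a \<in> J_odd\<close> by (auto intro: to_poly_J_odd)
  then have "p = 0"
    by (simp add: to_poly_simps to_poly_eval_poly)
  then show "a \<in> J_R" using p by (simp add: eval_poly_def)
qed

section \<open>Every element lies in A modulo odd elements\<close>

definition A_plus_J_odd :: "FA set" where
  "A_plus_J_odd = {x. \<exists>a\<in>A_FA. x - a \<in> J_odd}"

lemma A_plus_J_odd_add:
  assumes "x \<in> A_plus_J_odd" "y \<in> A_plus_J_odd"
  shows "x + y \<in> A_plus_J_odd"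
proof -
  obtain a b where ab: "a \<in> A_FA" "x - a \<in> J_odd" "b \<in> A_FA" "y - b \<in> J_odd"
    using assms unfolding A_plus_J_odd_def by blast
  have eq: "x + y - (a + b) = (x - a) + (y - b)" by (simp add: algebra_simps)
  have "x + y - (a + b) \<in> J_odd" unfolding eq by (rule J_odd_closed(2)[OF ab(2,4)])
  then show ?thesis using ab unfolding A_plus_J_odd_def by (blast intro: A_FA_closed)
qed

lemma A_plus_J_odd_mult:
  assumes "x \<in> A_plus_J_odd" "y \<in> A_plus_J_odd"
  shows "x * y \<in> A_plus_J_odd"
proof -
  obtain a b where ab: "a \<in> A_FA" "x - a \<in> J_odd" "b \<in> A_FA" "y - b \<in> J_odd"
    using assms unfolding A_plus_J_odd_def by blast
  have eq: "x * y - a * b = (x - a) * y + a * (y - b)" by (simp add: algebra_simps)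
  have "x * y - a * b \<in> J_odd"
    unfolding eq by (rule J_odd_closed(2)[OF J_odd_closed(5)[OF ab(2)] J_odd_closed(4)[OF ab(4)]])
  then show ?thesis using ab unfolding A_plus_J_odd_def by (blast intro: A_FA_closed)
qed

lemma A_plus_J_odd_cong: "x \<in> A_plus_J_odd \<Longrightarrow> y - x \<in> J_odd \<Longrightarrow> y \<in> A_plus_J_odd"
proof -
  assume "x \<in> A_plus_J_odd" "y - x \<in> J_odd"
  then obtain a where a: "a \<in> A_FA" "x - a \<in> J_odd" unfolding A_plus_J_odd_def by blast
  have eq: "y - a = (y - x) + (x - a)" by simp
  have "y - a \<in> J_odd" unfolding eq by (rule J_odd_closed(2)[OF \<open>y - x \<in> J_odd\<close> a(2)])
  then show ?thesis using a(1) unfolding A_plus_J_odd_def by blast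
qed

lemma A_FA_subset_A_plus_J_odd: "A_FA \<subseteq> A_plus_J_odd"
  unfolding A_plus_J_odd_def using J_odd_closed(1) by force

lemma J_odd_subset_A_plus_J_odd: "J_odd \<subseteq> A_plus_J_odd"
  unfolding A_plus_J_odd_def using A_FA_closed(1)[of 0] by (force simp: scal_def)

lemma A_plus_J_odd_sum:
  "(\<And>i. i \<in> I \<Longrightarrow> f i \<in> A_plus_J_odd) \<Longrightarrow> sum f I \<in> A_plus_J_odd"
  using J_odd_closed(1) J_odd_subset_A_plus_J_odd
  by (induction I rule: infinite_finite_induct) (auto intro: A_plus_J_odd_add)

lemma T_Pos_Pos_A_plus_J_odd: "T m Pos Pos \<in> A_plus_J_odd"
proof (cases "even m")
  case True
  then obtain k where k: "m = 2 * k" by blast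
  show ?thesis
  proof (cases "k = 0")
    case True
    then show ?thesis using k A_FA_one A_FA_subset_A_plus_J_odd by (auto simp: T_def)
  next
    case False
    then show ?thesis using k A_FA_T A_FA_subset_A_plus_J_odd by auto
  qed
next
  case False
  then show ?thesis using T_odd_J_odd J_odd_subset_A_plus_J_odd by auto
qed

lemma T_A_plus_J_odd: "T m i j \<in> A_plus_J_odd"
proof (cases "i = j")
  case False
  then show ?thesis using T_offdiag_J_odd J_odd_subset_A_plus_J_odd by auto
next
  case True
  show ?thesis
  proof (cases i)
    case Pos
    then show ?thesis using True T_Pos_Pos_A_plus_J_odd by simp
  next
    case Neg
    have "-1 \<in> A_FA"
      using A_FA_closed(1)[of "-1"] by (simp add: scal_def single_uminus)
    then have "(-1) ^ m * T m Pos Pos \<in> A_plus_J_odd"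
      using A_FA_power A_FA_subset_A_plus_J_odd T_Pos_Pos_A_plus_J_odd
      by (blast intro: A_plus_J_odd_mult)
    moreover have "T m Neg Neg - (-1) ^ m * T m Pos Pos = (-1) * rel2 m Pos Pos"
      by (simp add: rel2_def)
    moreover have "(-1) * rel2 m Pos Pos \<in> J_odd"
      using J_R_subset_J_odd rel2_in_J_R J_odd_closed(4) by blast
    ultimately show ?thesis
      using True Neg by (auto intro: A_plus_J_odd_cong)
  qed
qed

lemma A_plus_J_odd_UNIV: "x \<in> A_plus_J_odd"
proof -
  have "Poly_Mapping.single (Word ls) c \<in> A_plus_J_odd" for ls c
  proof (induction ls arbitrary: c)
    case Nil
    have "Poly_Mapping.single (Word []) c = scal c" by (simp add: scal_def zero_word_def)
    then show ?case using A_FA_closed(1) A_FA_subset_A_plus_J_odd by auto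
  next
    case (Cons l ls)
    obtain k i j where l: "l = (k, i, j)" by (cases l)
    have "Poly_Mapping.single (Word (l # ls)) c = T (Suc k) i j * Poly_Mapping.single (Word ls) c"
      by (simp add: l T_def mult_single plus_word_def)
    then show ?case using A_plus_J_odd_mult T_A_plus_J_odd Cons.IH by simp
  qed
  then have "Poly_Mapping.single w c \<in> A_plus_J_odd" for w c
    by (cases w) simp
  then have "(\<Sum>w\<in>Poly_Mapping.keys x. Poly_Mapping.single w (Poly_Mapping.lookup x w)) \<in> A_plus_J_odd"
    by (intro A_plus_J_odd_sum)
  then show ?thesis using poly_mapping_sum_single[of x] by simp
qed

section \<open>The coproduct modulo odd elements\<close>

lemma J2_sum: "(\<And>i. i \<in> S \<Longrightarrow> f i \<in> J2) \<Longrightarrow> sum f S \<in> J2"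
  by (induction S rule: infinite_finite_induct) (auto intro: J2.intros)

lemma sum_atLeastAtMost_double_split:
  fixes f :: "nat \<Rightarrow> 'a::comm_monoid_add"
  shows "(\<Sum>s\<in>{0..2 * k}. f s) = (\<Sum>a\<in>{0..k}. f (2 * a)) + (\<Sum>a\<in>{0..<k}. f (2 * a + 1))"
proof (induction k)
  case (Suc k)
  have "{0..2 * Suc k} = insert (Suc (Suc (2 * k))) (insert (Suc (2 * k)) {0..2 * k})" by auto
  then show ?case using Suc.IH by (simp add: add_ac)
qed simp

lemma Delta_T_even_Pos_Pos:
  "Delta_T (2 * k) Pos Pos
     - (\<Sum>a\<in>{0..k}. tens (T (2 * a) Pos Pos) (T (2 * (k - a)) Pos Pos)) \<in> J2"
proof -
  define P where "P s = tens (T s Pos Pos) (T (2 * k - s) Pos Pos)" for s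
  define N where "N s = tens ((-1) * T s Pos Neg) (T (2 * k - s) Neg Pos)" for s
  have "Delta_T (2 * k) Pos Pos = (\<Sum>s\<in>{0..2 * k}. P s + N s)"
    unfolding Delta_T_def P_def N_def by simp
  moreover have "(\<Sum>a\<in>{0..k}. tens (T (2 * a) Pos Pos) (T (2 * (k - a)) Pos Pos))
      = (\<Sum>a\<in>{0..k}. P (2 * a))"
    unfolding P_def by (simp add: diff_mult_distrib2)
  ultimately have "Delta_T (2 * k) Pos Pos
      - (\<Sum>a\<in>{0..k}. tens (T (2 * a) Pos Pos) (T (2 * (k - a)) Pos Pos))
      = (\<Sum>a\<in>{0..<k}. P (2 * a + 1)) + (\<Sum>s\<in>{0..2 * k}. N s)"
    by (simp add: sum.distrib sum_atLeastAtMost_double_split[of P k])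
  also have "\<dots> \<in> J2"
    unfolding P_def N_def
    by (intro J2.add J2_sum J2.left T_odd_J_odd J_odd_closed T_offdiag_J_odd) simp_all
  finally show ?thesis .
qed

theorem lemma5p12:
  shows
    \<comment> \<open>A \<rightarrow> YQ(1)/(YQ(1)_1) is surjective\<close>
    "(\<forall>x. \<exists>a \<in> A_FA. x - a \<in> J_odd)
     \<comment> \<open>A \<rightarrow> YQ(1)/(YQ(1)_1) is injective\<close>
     \<and> (\<forall>a \<in> A_FA. a \<in> J_odd \<longrightarrow> a \<in> J_R)
     \<comment> \<open>A is the polynomial algebra C[T^(2k)_11]_{k>0}: generators commute in YQ(1),\<close>
     \<and> (\<forall>k l. T (2 * k) Pos Pos * T (2 * l) Pos Pos - T (2 * l) Pos Pos * T (2 * k) Pos Pos \<in> J_R)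
     \<comment> \<open>the evaluation map C[x_0,x_1,...] \<rightarrow> A is onto A and injective\<close>
     \<and> (\<forall>a \<in> A_FA. \<exists>p. a - eval_poly p \<in> J_R)
     \<and> (\<forall>p. eval_poly p \<in> J_R \<longrightarrow> p = 0)
     \<comment> \<open>quotient coproduct: Delta T^(2k)_11 = sum_{a+b=k} T^(2a)_11 (x) T^(2b)_11\<close>
     \<and> (\<forall>k. Delta_T (2 * k) Pos Pos
              - (\<Sum>a \<in> {0..k}. tens (T (2 * a) Pos Pos) (T (2 * (k - a)) Pos Pos)) \<in> J2)"
  using A_plus_J_odd_UNIV[unfolded A_plus_J_odd_def] A_FA_J_odd_imp_J_R T_even_commute
    A_FA_eval_poly eval_poly_J_R_eq_0 Delta_T_even_Pos_Pos
  by blast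

end
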